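(* Let $G=(\mathcal{V},\mathcal{E})$ be a hypergraph, $P$ a pmf on $\mathcal{V}$, $L\ge1$, and suppose $G_P$ is complete multipartite with partition $\{\mathcal{I}_j\}_{j=1}^k$ of $\mathrm{supp}(P)$ into independent sets. Define the pmf $P^*$ on $[k]$ by $P^*(j)=\sum_{v\in\mathcal{I}_j}P(v)$. Then $I_{L+1}(G,P)=H_{L+1}(P^* )$ and for every $\ell\in[L+1]$, $$\theta^{(\ell)}_{L+1}(G,P)=2H_{L+1}(P^* )-\frac{2L+1-\ell}{L}H_{2L+2-\ell}(P^* ).$$
   Context: Notation: $[j]=\{1,\dots,j\}$, $[i:j]=\{i,\dots,j\}$; $\log$ base 2. A hypergraph $G=(\mathcal{V},\mathcal{E})$ has finite $\mathcal{V}$ and $\mathcal{E}\subseteq2^{\mathcal{V}}$ with edges of cardinality $\ge2$. An independent set is a vertex subset none of whose subsets is an edge; a hypergraph is complete multipartite with partition $\{\mathcal{I}_j\}$ of its vertex set into independent sets if every vertex subset is either an edge or contained in some $\mathcal{I}_j$. $G_P=(\mathcal{V}_P,\mathcal{E}_P)$ with $\mathcal{V}_P=\mathrm{supp}(P)$ and $\mathcal{E}_P$ the edges of $G$ contained in $\mathcal{V}_P$. For $v_{[k]}\in\mathcal{V}^k$, $\sigma(v_{[k]})=\{v_1,\dots,v_k\}$, $P(v_S)=\prod_{j\in S}P(v_j)$. $I_{L+1}(G,P):=-\frac1L\log\sum_{v_{[L+1]}:\sigma(v_{[L+1]})\notin\mathcal{E}}P(v_{[L+1]})$, $\theta^{(L+1)}_{L+1}(G,P):=I_{L+1}(G,P)$,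 and for $\ell\in[L]$, $\theta^{(\ell)}_{L+1}(G,P):=2I_{L+1}(G,P)+\frac1L\log\sum_{v_{[\ell]}}P(v_{[\ell]})\Big[\sum_{v_{[\ell+1:L+1]}:\sigma(v_{[L+1]})\notin\mathcal{E}}P(v_{[\ell+1:L+1]})\Big]^2$. The Rényi entropy of order $\alpha\ge2$ is $H_\alpha(Q)=-\frac{1}{\alpha-1}\log\sum_uQ(u)^\alpha$. *)

theory Defs
  imports "HOL-Library.FuncSet" Complex_Main
begin

definition hypergraph :: "'a set \<Rightarrow> 'a set set \<Rightarrow> bool" where
  "hypergraph V E \<longleftrightarrow> finite V \<and> E \<subseteq> Pow V \<and> (\<forall>e\<in>E. 2 \<le> card e)"

definition is_pmf_on :: "'a set \<Rightarrow> ('a \<Rightarrow> real) \<Rightarrow> bool" where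
  "is_pmf_on V P \<longleftrightarrow> (\<forall>v. 0 \<le> P v) \<and> (\<forall>v. v \<notin> V \<longrightarrow> P v = 0) \<and> (\<Sum>v\<in>V. P v) = 1"

definition supp :: "'a set \<Rightarrow> ('a \<Rightarrow> real) \<Rightarrow> 'a set" where
  "supp V P = {v \<in> V. P v \<noteq> 0}"

definition edges_P :: "'a set \<Rightarrow> 'a set set \<Rightarrow> ('a \<Rightarrow> real) \<Rightarrow> 'a set set" where
  "edges_P V E P = {e \<in> E. e \<subseteq> supp V P}"

definition independent_set :: "'a set \<Rightarrow> 'a set set \<Rightarrow> 'a set \<Rightarrow> bool" where
  "independent_set V E S \<longleftrightarrow> S \<subseteq> V \<and> (\<forall>T. T \<subseteq> S \<longrightarrow> T \<notin> E)"

definition complete_multipartite ::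
    "'a set \<Rightarrow> 'a set set \<Rightarrow> nat \<Rightarrow> (nat \<Rightarrow> 'a set) \<Rightarrow> bool" where
  "complete_multipartite V E k I \<longleftrightarrow>
     (\<forall>j\<in>{1..k}. I j \<noteq> {} \<and> independent_set V E (I j)) \<and>
     (\<forall>i\<in>{1..k}. \<forall>j\<in>{1..k}. i \<noteq> j \<longrightarrow> I i \<inter> I j = {}) \<and>
     (\<Union>j\<in>{1..k}. I j) = V \<and>
     (\<forall>S. S \<subseteq> V \<longrightarrow> S \<in> E \<or> (\<exists>j\<in>{1..k}. S \<subseteq> I j))"

text \<open>Tuples v_[m] in V^m are functions on {1..m} (extensional).\<close>
definition I_L1 :: "'a set \<Rightarrow> 'a set set \<Rightarrow> ('a \<Rightarrow> real) \<Rightarrow> nat \<Rightarrow> real" where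
  "I_L1 V E P L = - (1 / real L) * log 2
     (\<Sum>v\<in>{1..L+1} \<rightarrow>\<^sub>E V. if v ` {1..L+1} \<notin> E then (\<Prod>j\<in>{1..L+1}. P (v j)) else 0)"

definition theta :: "'a set \<Rightarrow> 'a set set \<Rightarrow> ('a \<Rightarrow> real) \<Rightarrow> nat \<Rightarrow> nat \<Rightarrow> real" where
  "theta V E P L l =
     (if l = L + 1 then I_L1 V E P L
      else 2 * I_L1 V E P L + (1 / real L) * log 2
        (\<Sum>u\<in>{1..l} \<rightarrow>\<^sub>E V. (\<Prod>j\<in>{1..l}. P (u j)) *
           (\<Sum>w\<in>{l+1..L+1} \<rightarrow>\<^sub>E V.
              if u ` {1..l} \<union> w ` {l+1..L+1} \<notin> E then (\<Prod>j\<in>{l+1..L+1}. P (w j)) else 0)\<^sup>2))"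

definition renyi :: "real \<Rightarrow> ('b \<Rightarrow> real) \<Rightarrow> 'b set \<Rightarrow> real" where
  "renyi alpha Q A = - (1 / (alpha - 1)) * log 2 (\<Sum>u\<in>A. Q u powr alpha)"

end

theory Submission imports Defs begin

text \<open>A tuple of positive probability has its entries in the support, and a nonempty set of
  support vertices is a non-edge iff it lies in some part, which is then unique. Grouping tuples by
  that part turns the non-edge mass of \<open>(L+1)\<close>-tuples into \<open>\<Sum>\<^sub>j P*(j)^(L+1)\<close>. In \<open>theta^(l)\<close>
  the first \<open>l\<close> entries already fix the part \<open>j\<close>, so the inner sum is \<open>P*(j)^(L+1-l)\<close> and the
  outer sum becomes \<open>\<Sum>\<^sub>j P*(j)^(2L+2-l)\<close>. Both are Renyi entropies at integer orders.\<close>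

lemma sum_PiE_prod_if_image_subset:
  fixes P :: "'a \<Rightarrow> 'b::comm_semiring_1"
  assumes "finite V" "finite B" "J \<subseteq> V"
  shows "(\<Sum>w\<in>B \<rightarrow>\<^sub>E V. if w ` B \<subseteq> J then \<Prod>b\<in>B. P (w b) else 0) = (\<Sum>x\<in>J. P x) ^ card B"
proof -
  have fin_J: "finite J" using assms finite_subset by blast
  have "{w \<in> B \<rightarrow>\<^sub>E V. w ` B \<subseteq> J} = B \<rightarrow>\<^sub>E J"
    using assms(3) by (auto simp: PiE_def Pi_def)
  then have "(\<Sum>w\<in>B \<rightarrow>\<^sub>E V. if w ` B \<subseteq> J then \<Prod>b\<in>B. P (w b) else 0)
      = (\<Sum>w\<in>B \<rightarrow>\<^sub>E J. \<Prod>b\<in>B. P (w b))"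
    using assms by (simp add: sum.inter_filter[symmetric] finite_PiE)
  also have "\<dots> = (\<Prod>b\<in>B. \<Sum>x\<in>J. P x)"
    using prod_sum_PiE[of B "\<lambda>_. J" "\<lambda>_ x. P x"] assms fin_J by simp
  finally show ?thesis by simp
qed

lemma power_sum_if_unique:
  fixes c :: "'b \<Rightarrow> 'c::comm_semiring_1"
  assumes "finite K" "\<And>i j. i \<in> K \<Longrightarrow> j \<in> K \<Longrightarrow> Q i \<Longrightarrow> Q j \<Longrightarrow> i = j" "0 < n"
  shows "(\<Sum>j\<in>K. if Q j then c j else 0) ^ n = (\<Sum>j\<in>K. if Q j then c j ^ n else 0)"
proof (cases "\<exists>j\<in>K. Q j")
  case True
  then obtain j where "j \<in> K" "Q j" by blast
  with assms(2) have "{i \<in> K. Q i} = {j}" by blast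
  then show ?thesis using assms(1) by (simp add: sum.inter_filter[symmetric])
next
  case False
  then show ?thesis using assms(3) by (simp add: zero_power)
qed

lemma complete_multipartite_part_unique:
  assumes "complete_multipartite V E k I" "S \<noteq> {}"
    and "i \<in> {1..k}" "j \<in> {1..k}" "S \<subseteq> I i" "S \<subseteq> I j"
  shows "i = j"
proof (rule ccontr)
  assume "i \<noteq> j"
  with assms(1,3,4) have "I i \<inter> I j = {}"
    unfolding complete_multipartite_def by blast
  with assms(2,5,6) show False by blast
qed

lemma complete_multipartite_nonedge_iff:
  assumes "complete_multipartite V E k I" "S \<subseteq> V"
  shows "S \<notin> E \<longleftrightarrow> (\<exists>j\<in>{1..k}. S \<subseteq> I j)"
proof
  show "S \<notin> E \<Longrightarrow> \<exists>j\<in>{1..k}. S \<subseteq> I j"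
    using assms unfolding complete_multipartite_def by blast
  show "\<exists>j\<in>{1..k}. S \<subseteq> I j \<Longrightarrow> S \<notin> E"
    using assms(1) unfolding complete_multipartite_def independent_set_def by blast
qed

lemma complete_multipartite_sum_parts:
  fixes x :: "'b::comm_monoid_add"
  assumes cm: "complete_multipartite V E k I" and "S \<subseteq> V" "S \<noteq> {}"
  shows "(\<Sum>j\<in>{1..k}. if S \<subseteq> I j then x else 0) = (if S \<notin> E then x else 0)"
proof (cases "S \<notin> E")
  case True
  then obtain j where j: "j \<in> {1..k}" "S \<subseteq> I j"
    using complete_multipartite_nonedge_iff[OF cm \<open>S \<subseteq> V\<close>] by blast
  then have "{i \<in> {1..k}. S \<subseteq> I i} = {j}"
    using complete_multipartite_part_unique[OF cm \<open>S \<noteq> {}\<close>] by blast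
  then show ?thesis using True by (simp add: sum.inter_filter[symmetric])
next
  case False
  then show ?thesis
    using complete_multipartite_nonedge_iff[OF cm \<open>S \<subseteq> V\<close>] by simp
qed

lemma complete_multipartite_supp_part_subset:
  assumes "complete_multipartite (supp V P) E' k I" "j \<in> {1..k}"
  shows "I j \<subseteq> V"
  using assms unfolding complete_multipartite_def supp_def by blast

lemma sum_tuples_nonedge_complete_multipartite:
  fixes P :: "'a \<Rightarrow> real"
  assumes fin_V: "finite V"
    and cm: "complete_multipartite (supp V P) (edges_P V E P) k I"
    and S0: "S0 \<subseteq> supp V P" and "finite B" "B \<noteq> {}"
  shows "(\<Sum>w\<in>B \<rightarrow>\<^sub>E V. if S0 \<union> w ` B \<notin> E then \<Prod>b\<in>B. P (w b) else 0)
    = (\<Sum>j\<in>{1..k}. if S0 \<subseteq> I j then (\<Sum>x\<in>I j. P x) ^ card B else 0)"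
proof -
  have split_parts: "(if S0 \<union> w ` B \<notin> E then \<Prod>b\<in>B. P (w b) else 0)
      = (\<Sum>j\<in>{1..k}. if S0 \<union> w ` B \<subseteq> I j then \<Prod>b\<in>B. P (w b) else 0)"
    if w: "w \<in> B \<rightarrow>\<^sub>E V" for w
  proof (cases "(\<Prod>b\<in>B. P (w b)) = 0")
    case False
    then have "w ` B \<subseteq> supp V P"
      using w \<open>finite B\<close> by (auto simp: supp_def)
    then have S: "S0 \<union> w ` B \<subseteq> supp V P" "S0 \<union> w ` B \<noteq> {}"
      using S0 \<open>B \<noteq> {}\<close> by auto
    then have edge_iff: "S0 \<union> w ` B \<in> edges_P V E P \<longleftrightarrow> S0 \<union> w ` B \<in> E"
      by (simp add: edges_P_def)
    show ?thesis
      by (simp only: complete_multipartite_sum_parts[OF cm S] edge_iff)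
  next
    case True
    show ?thesis unfolding True by simp
  qed
  have "(\<Sum>w\<in>B \<rightarrow>\<^sub>E V. if S0 \<union> w ` B \<notin> E then \<Prod>b\<in>B. P (w b) else 0)
      = (\<Sum>w\<in>B \<rightarrow>\<^sub>E V. \<Sum>j\<in>{1..k}. if S0 \<union> w ` B \<subseteq> I j then \<Prod>b\<in>B. P (w b) else 0)"
    using split_parts by (rule sum.cong[OF refl])
  also have "\<dots> = (\<Sum>j\<in>{1..k}. \<Sum>w\<in>B \<rightarrow>\<^sub>E V. if S0 \<union> w ` B \<subseteq> I j then \<Prod>b\<in>B. P (w b) else 0)"
    by (rule sum.swap)
  also have "\<dots> = (\<Sum>j\<in>{1..k}. if S0 \<subseteq> I j then (\<Sum>x\<in>I j. P x) ^ card B else 0)"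
    using sum_PiE_prod_if_image_subset[OF fin_V \<open>finite B\<close>
        complete_multipartite_supp_part_subset[OF cm]]
    by (intro sum.cong) auto
  finally show ?thesis .
qed

lemma renyi_of_nat:
  assumes "\<And>u. u \<in> A \<Longrightarrow> 0 \<le> Q u" "0 < n"
  shows "renyi (real n) Q A = - (1 / (real n - 1)) * log 2 (\<Sum>u\<in>A. Q u ^ n)"
  using assms by (simp add: renyi_def powr_realpow')

lemma I_L1_complete_multipartite:
  assumes "finite V" "complete_multipartite (supp V P) (edges_P V E P) k I"
  shows "I_L1 V E P L = - (1 / real L) * log 2 (\<Sum>j\<in>{1..k}. (\<Sum>v\<in>I j. P v) ^ (L + 1))"
  using sum_tuples_nonedge_complete_multipartite[OF assms, of "{}" "{1..L+1}"]
  by (simp add: I_L1_def)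

lemma theta_complete_multipartite:
  assumes fin_V: "finite V" and cm: "complete_multipartite (supp V P) (edges_P V E P) k I"
    and "1 \<le> l" "l \<le> L"
  shows "theta V E P L l = 2 * I_L1 V E P L
    + (1 / real L) * log 2 (\<Sum>j\<in>{1..k}. (\<Sum>v\<in>I j. P v) ^ (2 * L + 2 - l))"
proof -
  let ?A = "{1..l}" and ?B = "{l+1..L+1}"
  let ?c = "\<lambda>j. (\<Sum>v\<in>I j. P v) ^ (L + 1 - l)"
  let ?inner = "\<lambda>u. \<Sum>w\<in>?B \<rightarrow>\<^sub>E V.
    if u ` ?A \<union> w ` ?B \<notin> E then \<Prod>j\<in>?B. P (w j) else 0"
  have weighted_square: "(\<Prod>i\<in>?A. P (u i)) * (?inner u)\<^sup>2
      = (\<Sum>j\<in>{1..k}. if u ` ?A \<subseteq> I j then (\<Prod>i\<in>?A. P (u i)) * (?c j)\<^sup>2 else 0)"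
    if u: "u \<in> ?A \<rightarrow>\<^sub>E V" for u
  proof (cases "(\<Prod>i\<in>?A. P (u i)) = 0")
    case False
    then have uA: "u ` ?A \<subseteq> supp V P"
      using u by (auto simp: supp_def)
    have card_B: "card ?B = L + 1 - l" by simp
    have "?inner u = (\<Sum>j\<in>{1..k}. if u ` ?A \<subseteq> I j then ?c j else 0)"
      using sum_tuples_nonedge_complete_multipartite[OF fin_V cm uA, of ?B] \<open>l \<le> L\<close>
      unfolding card_B by simp
    also have "\<dots>\<^sup>2 = (\<Sum>j\<in>{1..k}. if u ` ?A \<subseteq> I j then (?c j)\<^sup>2 else 0)"
      using complete_multipartite_part_unique[OF cm, of "u ` ?A"] \<open>1 \<le> l\<close>
      by (intro power_sum_if_unique) auto
    finally show ?thesis by (simp add: sum_distrib_left if_distrib cong: if_cong)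
  next
    case True
    show ?thesis unfolding True by (simp cong: if_cong)
  qed
  have "(\<Sum>u\<in>?A \<rightarrow>\<^sub>E V. (\<Prod>i\<in>?A. P (u i)) * (?inner u)\<^sup>2)
      = (\<Sum>u\<in>?A \<rightarrow>\<^sub>E V. \<Sum>j\<in>{1..k}.
          if u ` ?A \<subseteq> I j then (\<Prod>i\<in>?A. P (u i)) * (?c j)\<^sup>2 else 0)"
    using weighted_square by (rule sum.cong[OF refl])
  also have "\<dots> = (\<Sum>j\<in>{1..k}. \<Sum>u\<in>?A \<rightarrow>\<^sub>E V.
      if u ` ?A \<subseteq> I j then (\<Prod>i\<in>?A. P (u i)) * (?c j)\<^sup>2 else 0)"
    by (rule sum.swap)
  also have "\<dots> = (\<Sum>j\<in>{1..k}. (?c j)\<^sup>2 *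
      (\<Sum>u\<in>?A \<rightarrow>\<^sub>E V. if u ` ?A \<subseteq> I j then \<Prod>i\<in>?A. P (u i) else 0))"
    by (simp add: sum_distrib_left if_distrib mult.commute cong: if_cong)
  also have "\<dots> = (\<Sum>j\<in>{1..k}. (\<Sum>v\<in>I j. P v) ^ (2 * L + 2 - l))"
  proof (intro sum.cong refl)
    fix j assume "j \<in> {1..k}"
    have "2 * L + 2 - l = (L + 1 - l) * 2 + l" using \<open>l \<le> L\<close> by simp
    then show "(?c j)\<^sup>2 * (\<Sum>u\<in>?A \<rightarrow>\<^sub>E V. if u ` ?A \<subseteq> I j then \<Prod>i\<in>?A. P (u i) else 0)
        = (\<Sum>v\<in>I j. P v) ^ (2 * L + 2 - l)"
      using sum_PiE_prod_if_image_subset[OF fin_V _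
          complete_multipartite_supp_part_subset[OF cm \<open>j \<in> {1..k}\<close>], of ?A P]
      by (simp add: power_add power_mult)
  qed
  finally show ?thesis
    using \<open>l \<le> L\<close> by (simp add: theta_def)
qed

theorem mainTheorem9:
  fixes V :: "'a set" and E :: "'a set set" and P :: "'a \<Rightarrow> real"
    and L k :: nat and I :: "nat \<Rightarrow> 'a set"
  assumes "hypergraph V E"
    and "is_pmf_on V P"
    and "1 \<le> L"
    and "complete_multipartite (supp V P) (edges_P V E P) k I"
  shows "I_L1 V E P L = renyi (real L + 1) (\<lambda>j. \<Sum>v\<in>I j. P v) {1..k}
    \<and> (\<forall>l\<in>{1..L+1}. theta V E P L l =
         2 * renyi (real L + 1) (\<lambda>j. \<Sum>v\<in>I j. P v) {1..k}
         - (real (2 * L + 1) - real l) / real L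
           * renyi (real (2 * L + 2) - real l) (\<lambda>j. \<Sum>v\<in>I j. P v) {1..k})"
proof -
  define Ps where "Ps = (\<lambda>j. \<Sum>v\<in>I j. P v)"
  have fin_V: "finite V" using assms(1) by (simp add: hypergraph_def)
  have Ps_nonneg: "0 \<le> Ps j" for j
    using assms(2) by (simp add: Ps_def is_pmf_on_def sum_nonneg)
  have I_L1_eq: "I_L1 V E P L = renyi (real L + 1) Ps {1..k}"
    using I_L1_complete_multipartite[OF fin_V assms(4)]
      renyi_of_nat[of "{1..k}" Ps "L + 1"] Ps_nonneg by (simp add: Ps_def add.commute)
  have "theta V E P L l = 2 * renyi (real L + 1) Ps {1..k}
      - (real (2 * L + 1) - real l) / real L * renyi (real (2 * L + 2) - real l) Ps {1..k}"
    if "l \<in> {1..L+1}" for l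
  proof (cases "l = L + 1")
    case True
    then show ?thesis using I_L1_eq assms(3) by (simp add: theta_def add.commute)
  next
    case False
    then have "l \<le> L" "real (2 * L + 2) - real l = real (2 * L + 2 - l)" using that by auto
    then show ?thesis
      using theta_complete_multipartite[OF fin_V assms(4), of l L] that I_L1_eq assms(3)
        renyi_of_nat[of "{1..k}" Ps "2 * L + 2 - l"] Ps_nonneg
      by (simp add: Ps_def field_simps)
  qed
  then show ?thesis using I_L1_eq by (simp add: Ps_def)
qed

end
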